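(* Let $(X_n)_{n\ge1}$ be a sequence of finite sets with $X_1=\emptyset$ and $|X_p|=p$ for every prime $p$, and for each $n\ge1$ let the cyclic group $\mathbb{Z}_n$ act on $X_n$ in such a way that $|X_n^i|=|X_{\gcd(s_n,i)}|$ for all $n,i\ge1$ (where $i$ acts through its residue modulo $n$). Then for every $n\ge1$ the triple $(X_n,\mathbb{Z}_n,S_n(q))$ exhibits the cyclic sieving phenomenon. The same holds with $s_n$ replaced by $g_n$ and $S_n(q)$ replaced by $G_n(q)$.
   Context: $\Phi_k(q)$ is the $k$-th cyclotomic polynomial. Set $s_1=g_1=0$, and for $n>1$ let $s_n$ be the smallest prime factor of $n$ and $g_n$ the greatest prime factor of $n$. Define $S_1(q)=G_1(q)=\Phi_1(q)=q-1$ and, for $n>1$, $S_n(q)=\Phi_{s_n}(q^{n/s_n})$, $G_n(q)=\Phi_{g_n}(q^{n/g_n})$. $X_n^i$ denotes the set of points of $X_n$ fixed by $i\in\mathbb{Z}_n$ (the additive group of integers modulo $n$). A triple $(X,\mathbb{Z}_n,f(q))$ with $f(q)\in\mathbb{Z}[q]$ exhibits the cyclic sieving phenomenon if $|X^i|=f(\omega_n^i)$ for all $i\in\mathbb{Z}_n$, where $\omega_n$ is a primitive $n$-th root of unity. *)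

theory Defs
  imports "HOL-Analysis.Analysis" "HOL-Computational_Algebra.Computational_Algebra"
begin

text \<open>The k-th cyclotomic polynomial, as the monic polynomial whose roots are
  exactly the primitive k-th roots of unity (complex coefficients; that they are
  integers is a fact, not part of the definition).\<close>
definition cyclotomic :: "nat \<Rightarrow> complex poly" where
  "cyclotomic k = (\<Prod>j\<in>{j\<in>{1..k}. coprime j k}. [:- cis (2 * pi * real j / real k), 1:])"

definition spf :: "nat \<Rightarrow> nat" where
  "spf n = (if n \<le> 1 then 0 else Min (prime_factors n))"

definition gpf :: "nat \<Rightarrow> nat" where
  "gpf n = (if n \<le> 1 then 0 else Max (prime_factors n))"

definition S_poly :: "nat \<Rightarrow> complex poly" where
  "S_poly n = (if n = 1 then cyclotomic 1
               else pcompose (cyclotomic (spf n)) (monom 1 (n div spf n)))"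

definition G_poly :: "nat \<Rightarrow> complex poly" where
  "G_poly n = (if n = 1 then cyclotomic 1
               else pcompose (cyclotomic (gpf n)) (monom 1 (n div gpf n)))"

definition cyclic_action :: "nat \<Rightarrow> 'a set \<Rightarrow> (nat \<Rightarrow> 'a \<Rightarrow> 'a) \<Rightarrow> bool" where
  "cyclic_action n X act \<longleftrightarrow>
     (\<forall>i<n. \<forall>x\<in>X. act i x \<in> X) \<and>
     (\<forall>x\<in>X. act 0 x = x) \<and>
     (\<forall>i<n. \<forall>j<n. \<forall>x\<in>X. act ((i + j) mod n) x = act i (act j x))"

definition fixed_points :: "'a set \<Rightarrow> (nat \<Rightarrow> 'a \<Rightarrow> 'a) \<Rightarrow> nat \<Rightarrow> 'a set" where
  "fixed_points X act i = {x\<in>X. act i x = x}"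

definition cyclic_sieving :: "'a set \<Rightarrow> nat \<Rightarrow> (nat \<Rightarrow> 'a \<Rightarrow> 'a) \<Rightarrow> complex poly \<Rightarrow> bool" where
  "cyclic_sieving X n act f \<longleftrightarrow>
     (\<forall>k. coeff f k \<in> \<int>) \<and>
     (\<forall>i<n. of_nat (card (fixed_points X act i)) = poly f (cis (2 * pi / real n) ^ i))"

end

theory Submission imports Defs begin

text \<open>For a prime \<open>p\<close>, \<open>\<Phi>\<^sub>p(q) = 1 + q + \<dots> + q\<^sup>p\<^sup>-\<^sup>1\<close>, so with \<open>n = p m\<close> the value of
  \<open>\<Phi>\<^sub>p(q\<^sup>m)\<close> at \<open>\<omega>\<^sub>n\<^sup>i\<close> is the sum of the first \<open>p\<close> powers of the \<open>p\<close>-th root of unity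
  \<open>\<omega>\<^sub>p\<^sup>i\<close>: it is \<open>p\<close> if \<open>p\<close> divides \<open>i\<close> and \<open>0\<close> otherwise. Since \<open>gcd(p, i)\<close> is \<open>p\<close> or \<open>1\<close>
  and \<open>|X\<^sub>p| = p\<close>, \<open>|X\<^sub>1| = 0\<close>, the hypothesis prescribes exactly these fixed-point counts.\<close>

lemma prod_linear_factors_dvd:
  fixes Q :: "'a::idom poly"
  assumes "finite A" "\<And>a. a \<in> A \<Longrightarrow> poly Q a = 0"
  shows "(\<Prod>a\<in>A. [:-a, 1:]) dvd Q"
  using assms
proof (induction A arbitrary: Q rule: finite_induct)
  case empty
  then show ?case by simp
next
  case (insert a A)
  then obtain R where R: "Q = [:-a, 1:] * R"
    using poly_eq_0_iff_dvd by (metis dvdE insertI1)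
  have "poly R b = 0" if "b \<in> A" for b
    using that insert.hyps(2) insert.prems[of b] R by auto
  then have "(\<Prod>a\<in>A. [:-a, 1:]) dvd R"
    using insert.IH by blast
  then have "[:-a, 1:] * (\<Prod>a\<in>A. [:-a, 1:]) dvd [:-a, 1:] * R"
    by (rule mult_dvd_mono[OF dvd_refl])
  then show ?case
    using R by (simp add: insert.hyps)
qed

lemma monic_dvd_eqI:
  fixes P Q :: "'a::idom poly"
  assumes "P dvd Q" "lead_coeff P = 1" "lead_coeff Q = 1" "degree Q \<le> degree P"
  shows "P = Q"
proof -
  obtain R where R: "Q = P * R"
    using assms(1) by (elim dvdE)
  have "P \<noteq> 0" "R \<noteq> 0"
    using assms(2,3) R by auto
  then have "degree R = 0"
    using R assms(4) degree_mult_eq by fastforce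
  then obtain c where "R = [:c:]"
    by (elim degree_eq_zeroE)
  moreover have "c = 1"
    using assms(2,3) R \<open>R \<noteq> 0\<close> calculation by (simp add: lead_coeff_mult)
  ultimately show ?thesis
    using R by simp
qed

lemma sum_powers_root_unity:
  fixes z :: "'a::field"
  assumes "z ^ n = 1"
  shows "(\<Sum>j<n. z ^ j) = (if z = 1 then of_nat n else 0)"
  using assms by (simp add: geometric_sum)

lemma cis_root_unity_power_eq_iff:
  fixes n i j :: nat
  assumes "n > 0"
  shows "cis (2 * pi / n) ^ i = cis (2 * pi / n) ^ j \<longleftrightarrow> i mod n = j mod n"
proof -
  have "cis (2 * pi / n) ^ k = exp (2 * of_real pi * \<i> * of_nat k / of_nat n)" for k
    by (simp only: Complex.DeMoivre) (simp add: cis_conv_exp mult_ac)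
  then show ?thesis
    using complex_root_unity_eq[of n i j] assms by simp
qed

lemma cis_root_unity_power_eq_1_iff:
  fixes n i :: nat
  assumes "n > 0"
  shows "cis (2 * pi / n) ^ i = 1 \<longleftrightarrow> n dvd i"
  using cis_root_unity_power_eq_iff[OF assms, of i 0] by (simp add: dvd_eq_mod_eq_0)

lemma cis_root_unity_power_order:
  fixes n i :: nat
  assumes "n > 0"
  shows "(cis (2 * pi / n) ^ i) ^ n = 1"
  using cis_root_unity_power_eq_1_iff[OF assms, of "i * n"] by (simp add: power_mult)

lemma degree_sum_monom_lessThan:
  assumes "n > 0"
  shows "degree (\<Sum>j<n. monom (1::'a::comm_semiring_1) j) = n - 1"
    and "lead_coeff (\<Sum>j<n. monom (1::'a::comm_semiring_1) j) = 1"
proof -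
  have "degree (\<Sum>j<n. monom (1::'a) j) \<le> n - 1"
    by (intro degree_sum_le) (auto intro: order_trans[OF degree_monom_le])
  moreover have coeff: "coeff (\<Sum>j<n. monom (1::'a) j) (n - 1) = 1"
    using assms by (simp add: coeff_sum coeff_monom)
  ultimately show "degree (\<Sum>j<n. monom (1::'a) j) = n - 1"
    by (metis le_antisym le_degree zero_neq_one)
  with coeff show "lead_coeff (\<Sum>j<n. monom (1::'a) j) = 1"
    by simp
qed

lemma coprime_prime_right_iff:
  fixes p :: nat
  assumes "prime p"
  shows "coprime j p \<longleftrightarrow> \<not> p dvd j"
  using assms
  by (cases "p dvd j") (auto simp: prime_imp_coprime coprime_absorb_right coprime_commute[of j p])

lemma cyclotomic_prime:
  assumes p: "prime p"
  shows "cyclotomic p = (\<Sum>j<p. monom 1 j)"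
proof -
  define \<zeta> where "\<zeta> = cis (2 * pi / p)"
  have p0: "p > 0"
    using p prime_gt_0_nat by blast
  have indices: "{j\<in>{1..p}. coprime j p} = {1..<p}"
    using p0 by (auto simp: coprime_prime_right_iff[OF p] le_less dest: dvd_imp_le)
  have cyc: "cyclotomic p = (\<Prod>z\<in>(\<lambda>j. \<zeta> ^ j) ` {1..<p}. [:-z, 1:])"
  proof -
    have "inj_on (\<lambda>j. \<zeta> ^ j) {1..<p}"
      by (rule inj_onI) (auto simp: \<zeta>_def cis_root_unity_power_eq_iff[OF p0])
    then show ?thesis
      unfolding cyclotomic_def indices
      by (simp add: prod.reindex \<zeta>_def Complex.DeMoivre mult_ac)
  qed
  have "cyclotomic p dvd (\<Sum>j<p. monom 1 j)"
    unfolding cyc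
  proof (rule prod_linear_factors_dvd)
    fix z assume "z \<in> (\<lambda>j. \<zeta> ^ j) ` {1..<p}"
    then obtain j where "z = \<zeta> ^ j" "0 < j" "j < p"
      by auto
    then have "z ^ p = 1" "z \<noteq> 1"
      using cis_root_unity_power_order[OF p0, of j] cis_root_unity_power_eq_1_iff[OF p0, of j]
      by (auto simp: \<zeta>_def dest: dvd_imp_le)
    then show "poly (\<Sum>j<p. monom 1 j) z = 0"
      by (simp add: poly_sum poly_monom sum_powers_root_unity)
  qed simp
  moreover have "degree (cyclotomic p) = p - 1"
    unfolding cyclotomic_def indices by (simp add: degree_prod_sum_eq)
  moreover have "lead_coeff (cyclotomic p) = 1"
    unfolding cyclotomic_def by (simp add: lead_coeff_prod)
  ultimately show ?thesis
    using degree_sum_monom_lessThan[OF p0, where 'a = complex] by (intro monic_dvd_eqI) simp_all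
qed

lemma cyclotomic_prime_pcompose_monom:
  assumes "prime p"
  shows "pcompose (cyclotomic p) (monom 1 m) = (\<Sum>j<p. monom 1 (m * j))"
  by (rule poly_eq_poly_eq_iff[THEN iffD1])
    (simp add: fun_eq_iff cyclotomic_prime[OF assms] poly_pcompose poly_sum poly_monom power_mult)

lemma poly_cyclotomic_prime_pcompose_root_unity:
  assumes p: "prime p" and n: "n = p * m" "m > 0"
  shows "poly (pcompose (cyclotomic p) (monom 1 m)) (cis (2 * pi / n) ^ i)
           = (if p dvd i then of_nat p else 0)"
proof -
  have p0: "p > 0"
    using p prime_gt_0_nat by blast
  have "(cis (2 * pi / n) ^ i) ^ m = cis (2 * pi / p) ^ i"
    using n p0 by (simp add: Complex.DeMoivre power_mult [symmetric] mult.commute)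
  then show ?thesis
    using cis_root_unity_power_eq_1_iff[OF p0] cis_root_unity_power_order[OF p0]
    by (simp add: cyclotomic_prime_pcompose_monom[OF p] poly_sum poly_monom power_mult
        sum_powers_root_unity)
qed

lemma coeff_cyclotomic_prime_pcompose_Ints:
  assumes "prime p"
  shows "coeff (pcompose (cyclotomic p) (monom 1 m)) k \<in> \<int>"
  by (auto simp: cyclotomic_prime_pcompose_monom[OF assms] coeff_sum coeff_monom intro!: Ints_sum)

lemma cyclic_sieving_cyclotomic_prime_pcompose:
  assumes p: "prime p" and "p dvd n"
    and fixed: "\<And>i. i < n \<Longrightarrow> card (fixed_points X act i) = (if p dvd i then p else 0)"
  shows "cyclic_sieving X n act (pcompose (cyclotomic p) (monom 1 (n div p)))"
  unfolding cyclic_sieving_def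
proof (intro conjI allI impI)
  fix i assume "i < n"
  then have n: "n = p * (n div p)" "n div p > 0"
    using \<open>p dvd n\<close> prime_gt_0_nat[OF p] by (auto elim!: dvdE intro: gr0I)
  then show "of_nat (card (fixed_points X act i))
               = poly (pcompose (cyclotomic p) (monom 1 (n div p))) (cis (2 * pi / n) ^ i)"
    using fixed[OF \<open>i < n\<close>] poly_cyclotomic_prime_pcompose_root_unity[OF p n] by simp
qed (rule coeff_cyclotomic_prime_pcompose_Ints[OF p])

lemma cyclic_sieving_empty_cyclotomic_1: "cyclic_sieving {} 1 act (cyclotomic 1)"
proof -
  have "cyclotomic 1 = [:-1, 1:]"
    by (simp add: cyclotomic_def)
  moreover have "coeff [:-1, 1::complex:] k \<in> \<int>" for k
    by (cases k) (auto simp: coeff_pCons split: nat.splits)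
  ultimately show ?thesis
    by (simp add: cyclic_sieving_def fixed_points_def)
qed

lemma prime_factors_nonempty:
  fixes n :: nat
  assumes "n > 1"
  shows "prime_factors n \<noteq> {}"
  using assms by (simp add: prime_factorization_empty_iff)

lemma spf_in_prime_factors:
  assumes "n > 1"
  shows "spf n \<in> prime_factors n"
  using assms Min_in[OF finite_set_mset prime_factors_nonempty[OF assms]] by (simp add: spf_def)

lemma gpf_in_prime_factors:
  assumes "n > 1"
  shows "gpf n \<in> prime_factors n"
  using assms Max_in[OF finite_set_mset prime_factors_nonempty[OF assms]] by (simp add: gpf_def)

lemma cyclic_sieving_prime_factor_selection:
  fixes X :: "nat \<Rightarrow> 'a set" and P :: "nat \<Rightarrow> nat"
  assumes X1: "X 1 = {}" and Xp: "\<And>p. prime p \<Longrightarrow> card (X p) = p"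
    and P: "\<And>n. n > 1 \<Longrightarrow> P n \<in> prime_factors n"
    and fixed: "\<And>n i. 1 \<le> n \<Longrightarrow> 1 \<le> i \<Longrightarrow> i \<le> n \<Longrightarrow>
                  card (fixed_points (X n) (act n) (i mod n)) = card (X (gcd (P n) i))"
    and n: "n \<ge> 1"
  shows "cyclic_sieving (X n) n (act n)
           (if n = 1 then cyclotomic 1 else pcompose (cyclotomic (P n)) (monom 1 (n div P n)))"
proof (cases "n = 1")
  case True
  then show ?thesis
    using X1 cyclic_sieving_empty_cyclotomic_1 by simp
next
  case False
  define p where "p = P n"
  have p: "prime p" "p dvd n"
    using P[of n] n False by (auto simp: p_def in_prime_factors_iff)
  have card_X_gcd: "card (X (gcd p i)) = (if p dvd i then p else 0)" for i
    using p X1 Xp by (auto simp: gcd_nat.absorb1 prime_imp_coprime)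
  have "card (fixed_points (X n) (act n) i) = (if p dvd i then p else 0)" if "i < n" for i
  proof (cases "i = 0")
    case True
    then show ?thesis
      using fixed[of n n] n p card_X_gcd[of n] by (simp add: p_def)
  next
    case False
    then show ?thesis
      using fixed[of n i] \<open>i < n\<close> card_X_gcd[of i] by (simp add: p_def)
  qed
  then have "cyclic_sieving (X n) n (act n) (pcompose (cyclotomic p) (monom 1 (n div p)))"
    by (rule cyclic_sieving_cyclotomic_prime_pcompose[OF p])
  then show ?thesis
    using False by (simp add: p_def)
qed

theorem corollary3:
  fixes X :: "nat \<Rightarrow> 'a set" and act :: "nat \<Rightarrow> nat \<Rightarrow> 'a \<Rightarrow> 'a"
  assumes fin: "\<And>n. n \<ge> 1 \<Longrightarrow> finite (X n)"
    and X1: "X 1 = {}"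
    and Xp: "\<And>p. prime p \<Longrightarrow> card (X p) = p"
    and act: "\<And>n. n \<ge> 1 \<Longrightarrow> cyclic_action n (X n) (act n)"
  shows "((\<forall>n i. 1 \<le> n \<longrightarrow> 1 \<le> i \<longrightarrow> i \<le> n \<longrightarrow>
              card (fixed_points (X n) (act n) (i mod n)) = card (X (gcd (spf n) i)))
           \<longrightarrow> (\<forall>n\<ge>1. cyclic_sieving (X n) n (act n) (S_poly n)))
       \<and> ((\<forall>n i. 1 \<le> n \<longrightarrow> 1 \<le> i \<longrightarrow> i \<le> n \<longrightarrow>
              card (fixed_points (X n) (act n) (i mod n)) = card (X (gcd (gpf n) i)))
           \<longrightarrow> (\<forall>n\<ge>1. cyclic_sieving (X n) n (act n) (G_poly n)))"
  unfolding S_poly_def G_poly_def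
  using cyclic_sieving_prime_factor_selection[OF X1 Xp spf_in_prime_factors, of act]
    cyclic_sieving_prime_factor_selection[OF X1 Xp gpf_in_prime_factors, of act]
  by blast

end
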